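(* Let $n=2$, let $H$ be a constant with $|H|<1$, and let $\varphi\in C^5((-1,1))$. Write points of $\mathbb R^2$ as $(x_1,x_2)$ and let $$Q(u)=\Delta u-\frac{u_iu_j}{1+|Du|^2}u_{ij}-\frac{2}{x_2}\Big(u_2-H\sqrt{1+|Du|^2}\Big).$$ Suppose $c_1,c_2,c_{3,1}\in C^2((-1,1))$ are functions of $x_1$ such that, for $$u_*=\varphi(x_1)+c_1(x_1)x_2+c_2(x_1)x_2^2+c_{3,1}(x_1)x_2^3\log x_2,$$ one has $Q(u_* )(x_1,x_2)=o(x_2)$ as $x_2\to0^+$ for each $x_1\in(-1,1)$. Then $c_{3,1}\equiv0$.
   Context: Subscripts denote partial derivatives and repeated indices are summed over $1,2$. The functions $c_1,c_2,c_{3,1}$ are the coefficients of the formal boundary expansion of solutions of $Q(u)=0$ with $u=\varphi$ on $\{x_2=0\}$; they are determined by requiring that the coefficients of $x_2^{-1}$, $x_2^0$ and $x_2^1$ in the expansion of $Q(u_* )$ vanish (in particular $c_1=\frac{H}{\sqrt{1-H^2}}\sqrt{1+\varphi'^2}$). *)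

theory Defs
  imports "HOL-Analysis.Analysis" "HOL-Library.Landau_Symbols"
begin

definition Ck_on :: "nat \<Rightarrow> (real \<Rightarrow> real) \<Rightarrow> real set \<Rightarrow> bool" where
  "Ck_on k f S \<longleftrightarrow>
     (\<forall>j<k. \<forall>x\<in>S. ((deriv ^^ j) f) differentiable (at x)) \<and> continuous_on S ((deriv ^^ k) f)"

definition pd1 :: "(real \<Rightarrow> real \<Rightarrow> real) \<Rightarrow> real \<Rightarrow> real \<Rightarrow> real" where
  "pd1 u x1 x2 = deriv (\<lambda>s. u s x2) x1"

definition pd2 :: "(real \<Rightarrow> real \<Rightarrow> real) \<Rightarrow> real \<Rightarrow> real \<Rightarrow> real" where
  "pd2 u x1 x2 = deriv (\<lambda>t. u x1 t) x2"

definition Qop :: "real \<Rightarrow> (real \<Rightarrow> real \<Rightarrow> real) \<Rightarrow> real \<Rightarrow> real \<Rightarrow> real" where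
  "Qop H u x1 x2 =
     (let u1 = pd1 u x1 x2; u2 = pd2 u x1 x2;
          u11 = pd1 (pd1 u) x1 x2; u12 = pd2 (pd1 u) x1 x2;
          u21 = pd1 (pd2 u) x1 x2; u22 = pd2 (pd2 u) x1 x2;
          W2 = 1 + u1\<^sup>2 + u2\<^sup>2
      in (u11 + u22) - (u1 * u1 * u11 + u1 * u2 * u12 + u2 * u1 * u21 + u2 * u2 * u22) / W2
         - 2 / x2 * (u2 - H * sqrt W2))"

end

theory Submission
  imports Defs "HOL-Real_Asymp.Real_Asymp"
begin

text \<open>
  Along a vertical line write t = x2, W = 1 + |Du|^2, N = W Delta u - u_i u_j u_ij and
  M = 2 u_2 W - t N. Then t W Q(u) = 2 H W^(3/2) - M, so Q(u_*) = o(t) makes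
  P = 4 H^2 W^3 - M^2 = (2 H W^(3/2) - M) (2 H W^(3/2) + M) an o(t^2), and also M when H = 0.
  For the ansatz u_*, all of W, N, M, P are polynomials in t, t log t and the boundary data,
  so their expansions modulo o(t^2) are computed in a ring of truncated jets, and every jet
  coefficient of P vanishes. The constant coefficient gives c1^2 = H^2 (1 + phi'^2 + c1^2) and
  the coefficient of t gives 2 (1 + phi'^2) c2 = (1 + c1^2) phi''. Differentiating these
  relations along the boundary expresses c1', c1'' and c2' through phi and c1, and then the
  coefficient of t^2 collapses to 12 c1 (1 + phi'^2) (1 + phi'^2 + c1^2) c31. For H \<noteq> 0 the first
  relation forces c1 \<noteq> 0, hence c31 = 0. For H = 0 the jet of M gives c1 = 0 and then
  -3 (1 + phi'^2) c31 = 0.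
\<close>

section \<open>Jets at 0+\<close>

text \<open>Jet c0 c1 c2 c3 c4 c5 stands for c0 + c1 t log t + c2 t + c3 (t log t)^2 + c4 t^2 log t + c5 t^2
  up to o(t^2) as t \<rightarrow> 0+. Monomials of degree three in t log t and t are o(t^2), so jets
  multiply like polynomials in t log t and t truncated above degree two.\<close>

datatype jet = Jet (j1: real) (jl: real) (jt: real) (jll: real) (jlt: real) (jtt: real)

instantiation jet :: comm_ring_1
begin

definition "0 = Jet 0 0 0 0 0 0"
definition "1 = Jet 1 0 0 0 0 0"
definition "a + b = Jet (j1 a + j1 b) (jl a + jl b) (jt a + jt b) (jll a + jll b) (jlt a + jlt b) (jtt a + jtt b)"
definition "- a = Jet (- j1 a) (- jl a) (- jt a) (- jll a) (- jlt a) (- jtt a)"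
definition "a - b = a + - (b :: jet)"
definition "a * b =
  Jet (j1 a * j1 b) (j1 a * jl b + jl a * j1 b) (j1 a * jt b + jt a * j1 b)
    (j1 a * jll b + jl a * jl b + jll a * j1 b) (j1 a * jlt b + jl a * jt b + jt a * jl b + jlt a * j1 b)
    (j1 a * jtt b + jt a * jt b + jtt a * j1 b)"

instance
  by standard (simp_all add: zero_jet_def one_jet_def plus_jet_def uminus_jet_def minus_jet_def
      times_jet_def jet.expand algebra_simps)

end

definition jet_const :: "real \<Rightarrow> jet" where
  "jet_const c = Jet c 0 0 0 0 0"

definition jet_t :: jet where
  "jet_t = Jet 0 0 1 0 0 0"

lemma of_nat_jet: "of_nat n = jet_const (of_nat n)"
  by (induction n) (simp_all add: jet_const_def zero_jet_def one_jet_def plus_jet_def)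

lemma numeral_jet: "numeral n = jet_const (numeral n)"
  by (metis of_nat_jet of_nat_numeral)

lemma jet_sel_times:
  "j1 (a * b) = j1 a * j1 b" "jt (a * b) = j1 a * jt b + jt a * j1 b"
  "jtt (a * b) = j1 a * jtt b + jt a * jt b + jtt a * j1 b"
  by (simp_all add: times_jet_def)

lemma jet_sel_plus: "j1 (a + b) = j1 a + j1 b" "jt (a + b) = jt a + jt b" "jtt (a + b) = jtt a + jtt b"
  by (simp_all add: plus_jet_def)

lemma jet_sel_minus: "j1 (a - b) = j1 a - j1 b" "jt (a - b) = jt a - jt b" "jtt (a - b) = jtt a - jtt b"
  by (simp_all add: minus_jet_def plus_jet_def uminus_jet_def)

lemma jet_sel_const:
  "j1 (jet_const c) = c" "jt (jet_const c) = 0" "jtt (jet_const c) = 0"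
  "j1 0 = 0" "jt 0 = 0" "jtt 0 = 0" "j1 1 = 1" "jt 1 = 0" "jtt 1 = 0" "j1 jet_t = 0" "jt jet_t = 1" "jtt jet_t = 0"
  "j1 (numeral n) = numeral n" "jt (numeral n) = 0" "jtt (numeral n) = 0"
  by (simp_all add: jet_const_def zero_jet_def one_jet_def jet_t_def numeral_jet)

lemmas jet_sel = jet_sel_times jet_sel_plus jet_sel_minus jet_sel_const

definition jet_lin :: "jet \<Rightarrow> real \<Rightarrow> real" where
  "jet_lin c L = jl c * L + jt c"

definition jet_quad :: "jet \<Rightarrow> real \<Rightarrow> real" where
  "jet_quad c L = jll c * L^2 + jlt c * L + jtt c"

definition eval_jet :: "jet \<Rightarrow> real \<Rightarrow> real" where
  "eval_jet c t = j1 c + t * jet_lin c (ln t) + t^2 * jet_quad c (ln t)"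

definition has_jet :: "(real \<Rightarrow> real) \<Rightarrow> jet \<Rightarrow> bool" where
  "has_jet f c \<longleftrightarrow> ((\<lambda>t. (f t - eval_jet c t) / t^2) \<longlongrightarrow> 0) (at_right 0)"

lemma eval_jet_times:
  "eval_jet (a * b) t = eval_jet a t * eval_jet b t
     - t^3 * (jet_lin a (ln t) * jet_quad b (ln t) + jet_quad a (ln t) * jet_lin b (ln t))
     - t^4 * (jet_quad a (ln t) * jet_quad b (ln t))"
  unfolding eval_jet_def jet_lin_def jet_quad_def times_jet_def jet.sel
  by (simp add: algebra_simps power2_eq_square power3_eq_cube power4_eq_xxxx)

lemma tendsto_sqrt_jet_lin: "((\<lambda>t. sqrt t * jet_lin c (ln t)) \<longlongrightarrow> 0) (at_right 0)"
proof -
  have "((\<lambda>t. jl c * (sqrt t * ln t) + jt c * sqrt t) \<longlongrightarrow> jl c * 0 + jt c * 0) (at_right 0)"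
    by (intro tendsto_intros; real_asymp)
  then show ?thesis by (simp add: jet_lin_def algebra_simps)
qed

lemma tendsto_sqrt_jet_quad: "((\<lambda>t. sqrt t * jet_quad c (ln t)) \<longlongrightarrow> 0) (at_right 0)"
proof -
  have "((\<lambda>t. jll c * (sqrt t * ln t ^ 2) + jlt c * (sqrt t * ln t) + jtt c * sqrt t)
      \<longlongrightarrow> jll c * 0 + jlt c * 0 + jtt c * 0) (at_right 0)"
    by (intro tendsto_intros; real_asymp)
  then show ?thesis by (simp add: jet_quad_def algebra_simps)
qed

lemma tendsto_eval_jet: "(eval_jet c \<longlongrightarrow> j1 c) (at_right 0)"
proof -
  have "((\<lambda>t. j1 c + sqrt t * (sqrt t * jet_lin c (ln t)) + t * (sqrt t * (sqrt t * jet_quad c (ln t))))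
      \<longlongrightarrow> j1 c + 0 * 0 + 0 * (0 * 0)) (at_right 0)"
    by (intro tendsto_intros tendsto_sqrt_jet_lin tendsto_sqrt_jet_quad; real_asymp)
  moreover have "eventually (\<lambda>t. j1 c + sqrt t * (sqrt t * jet_lin c (ln t))
      + t * (sqrt t * (sqrt t * jet_quad c (ln t))) = eval_jet c t) (at_right 0)"
    by (rule eventually_mono[OF eventually_at_right_less])
      (simp add: eval_jet_def power2_eq_square mult.assoc[symmetric])
  ultimately show ?thesis by (simp add: tendsto_cong)
qed

lemma has_jet_tendsto:
  assumes "has_jet f c"
  shows "(f \<longlongrightarrow> j1 c) (at_right 0)"
proof -
  define r where "r t = (f t - eval_jet c t) / t^2" for t
  have r: "(r \<longlongrightarrow> 0) (at_right 0)" using assms unfolding has_jet_def r_def .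
  have "((\<lambda>t. r t * t^2 + eval_jet c t) \<longlongrightarrow> 0 * 0 + j1 c) (at_right 0)"
    by (intro tendsto_intros r tendsto_eval_jet; real_asymp)
  moreover have "eventually (\<lambda>t. r t * t^2 + eval_jet c t = f t) (at_right 0)"
    by (rule eventually_mono[OF eventually_at_right_less]) (simp add: r_def)
  ultimately show ?thesis by (simp add: tendsto_cong)
qed

lemma has_jet_const: "has_jet (\<lambda>t. c) (jet_const c)"
  by (simp add: has_jet_def eval_jet_def jet_lin_def jet_quad_def jet_const_def)

lemma has_jet_one: "has_jet (\<lambda>t. 1) 1"
  using has_jet_const[of 1] by (simp add: jet_const_def one_jet_def)

lemma has_jet_numeral: "has_jet (\<lambda>t. numeral n) (numeral n)"
  unfolding numeral_jet by (rule has_jet_const)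

lemma has_jet_ident: "has_jet (\<lambda>t. t) jet_t"
  by (simp add: has_jet_def eval_jet_def jet_lin_def jet_quad_def jet_t_def)

lemma has_jet_add: "has_jet f a \<Longrightarrow> has_jet g b \<Longrightarrow> has_jet (\<lambda>t. f t + g t) (a + b)"
  unfolding has_jet_def
  by (drule (1) tendsto_add)
    (simp add: eval_jet_def jet_lin_def jet_quad_def plus_jet_def add_divide_distrib[symmetric] algebra_simps)

lemma has_jet_diff: "has_jet f a \<Longrightarrow> has_jet g b \<Longrightarrow> has_jet (\<lambda>t. f t - g t) (a - b)"
  unfolding has_jet_def
  by (drule (1) tendsto_diff)
    (simp add: eval_jet_def jet_lin_def jet_quad_def minus_jet_def plus_jet_def uminus_jet_def
      diff_divide_distrib[symmetric] algebra_simps)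

lemma has_jet_mult:
  assumes f: "has_jet f a" and g: "has_jet g b"
  shows "has_jet (\<lambda>t. f t * g t) (a * b)"
proof -
  define r where "r t = (f t - eval_jet a t) / t^2" for t
  define s where "s t = (g t - eval_jet b t) / t^2" for t
  define la qa lb qb where "la t = sqrt t * jet_lin a (ln t)" and "qa t = sqrt t * jet_quad a (ln t)"
    and "lb t = sqrt t * jet_lin b (ln t)" and "qb t = sqrt t * jet_quad b (ln t)" for t
  have r: "(r \<longlongrightarrow> 0) (at_right 0)" and s: "(s \<longlongrightarrow> 0) (at_right 0)"
    using f g unfolding has_jet_def r_def s_def by auto
  have la: "(la \<longlongrightarrow> 0) (at_right 0)" and qa: "(qa \<longlongrightarrow> 0) (at_right 0)"
    and lb: "(lb \<longlongrightarrow> 0) (at_right 0)" and qb: "(qb \<longlongrightarrow> 0) (at_right 0)"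
    unfolding la_def qa_def lb_def qb_def by (intro tendsto_sqrt_jet_lin tendsto_sqrt_jet_quad)+
  have "((\<lambda>t. la t * qb t + qa t * lb t + t * (qa t * qb t) + eval_jet a t * s t + r t * eval_jet b t
      + t^2 * (r t * s t)) \<longlongrightarrow> 0 * 0 + 0 * 0 + 0 * (0 * 0) + j1 a * 0 + 0 * j1 b + 0 * (0 * 0)) (at_right 0)"
    by (intro tendsto_intros la qa lb qb r s tendsto_eval_jet; real_asymp)
  moreover have "eventually (\<lambda>t. la t * qb t + qa t * lb t + t * (qa t * qb t) + eval_jet a t * s t
      + r t * eval_jet b t + t^2 * (r t * s t) = (f t * g t - eval_jet (a * b) t) / t^2) (at_right 0)"
  proof (rule eventually_mono[OF eventually_at_right_less])
    fix t :: real
    assume t: "0 < t"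
    have "f t = eval_jet a t + t^2 * r t" and "g t = eval_jet b t + t^2 * s t"
      using t by (simp_all add: r_def s_def)
    moreover have st: "sqrt t * (sqrt t * x) = t * x" for x
      using t by (simp add: mult.assoc[symmetric])
    ultimately show "la t * qb t + qa t * lb t + t * (qa t * qb t) + eval_jet a t * s t
      + r t * eval_jet b t + t^2 * (r t * s t) = (f t * g t - eval_jet (a * b) t) / t^2"
      using t unfolding eval_jet_times la_def qa_def lb_def qb_def
      by (simp add: field_simps power2_eq_square power3_eq_cube power4_eq_xxxx st)
  qed
  ultimately show ?thesis unfolding has_jet_def by (simp add: tendsto_cong)
qed

lemma has_jet_power: "has_jet f a \<Longrightarrow> has_jet (\<lambda>t. f t ^ n) (a ^ n)"
  by (induction n) (simp_all add: has_jet_one has_jet_mult)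

lemmas has_jet_intros =
  has_jet_add has_jet_diff has_jet_mult has_jet_power has_jet_one has_jet_numeral has_jet_const has_jet_ident

lemma tendsto_const_add_null_imp_eq_0:
  assumes "((\<lambda>t. c + g t) \<longlongrightarrow> 0) (at_right (0::real))" and "(g \<longlongrightarrow> 0) (at_right 0)"
  shows "c = (0::real)"
proof -
  have "((\<lambda>t. c + g t) \<longlongrightarrow> c + 0) (at_right 0)" using assms(2) by (intro tendsto_intros)
  with assms(1) show ?thesis using tendsto_unique[of "at_right (0::real)"] by force
qed

lemma eventually_ln_nonzero: "eventually (\<lambda>t::real. 0 < t \<and> ln t \<noteq> 0) (at_right 0)"
proof -
  have "eventually (\<lambda>t::real. 0 < t \<and> t < 1) (at_right 0)"
    by (intro eventually_conj eventually_at_right_less) (rule eventually_at_right_to_0[THEN iffD2], real_asymp)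
  then show ?thesis by eventually_elim simp
qed

lemma quadratic_in_ln_tendsto_0_imp:
  assumes "((\<lambda>t. a * ln t ^ 2 + b * ln t + c) \<longlongrightarrow> 0) (at_right (0::real))"
  shows "a = 0" and "b = 0" and "c = 0"
proof -
  note ev = eventually_mono[OF eventually_ln_nonzero]
  show a: "a = 0"
  proof (rule tendsto_const_add_null_imp_eq_0)
    show "((\<lambda>t. a + (b * (1 / ln t) + c * (1 / ln t ^ 2))) \<longlongrightarrow> 0) (at_right 0)"
      using tendsto_mult_zero[OF assms, of "\<lambda>t. 1 / ln t ^ 2"]
      by (rule Lim_transform_eventually[OF _ ev], real_asymp) (simp add: field_simps power2_eq_square)
    have "((\<lambda>t. b * (1 / ln t) + c * (1 / ln t ^ 2)) \<longlongrightarrow> b * 0 + c * 0) (at_right 0)"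
      by (intro tendsto_intros; real_asymp)
    then show "((\<lambda>t. b * (1 / ln t) + c * (1 / ln t ^ 2)) \<longlongrightarrow> 0) (at_right 0)" by simp
  qed
  show b: "b = 0"
  proof (rule tendsto_const_add_null_imp_eq_0)
    show "((\<lambda>t. b + c * (1 / ln t)) \<longlongrightarrow> 0) (at_right 0)"
      using tendsto_mult_zero[OF assms, of "\<lambda>t. 1 / ln t"]
      by (rule Lim_transform_eventually[OF _ ev], real_asymp) (simp add: a field_simps)
    have "((\<lambda>t. c * (1 / ln t)) \<longlongrightarrow> c * 0) (at_right 0)" by (intro tendsto_intros; real_asymp)
    then show "((\<lambda>t. c * (1 / ln t)) \<longlongrightarrow> 0) (at_right 0)" by simp
  qed
  show "c = 0"
    using assms by (simp add: a b tendsto_const_iff)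
qed

lemma jet_eq_0_if_smallo:
  assumes "has_jet f c" and "((\<lambda>t. f t / t^2) \<longlongrightarrow> 0) (at_right 0)"
  shows "c = 0"
proof -
  define e where "e t = eval_jet c t / t^2" for t
  define lq where "lq t = sqrt t * jet_quad c (ln t)" for t
  have e: "(e \<longlongrightarrow> 0) (at_right 0)"
    using tendsto_diff[OF assms(2) assms(1)[unfolded has_jet_def]] unfolding e_def
    by (simp add: diff_divide_distrib)
  have lq: "(lq \<longlongrightarrow> 0) (at_right 0)" unfolding lq_def by (rule tendsto_sqrt_jet_quad)
  note ev = eventually_mono[OF eventually_ln_nonzero]
  have c0: "j1 c = 0"
  proof -
    have "((\<lambda>t. e t * t^2) \<longlongrightarrow> 0) (at_right 0)" by (rule tendsto_mult_zero[OF e]) real_asymp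
    then have "(eval_jet c \<longlongrightarrow> 0) (at_right 0)" by (rule Lim_transform_eventually[OF _ ev]) (simp add: e_def)
    with tendsto_eval_jet show ?thesis using tendsto_unique[of "at_right (0::real)"] by force
  qed
  have c1: "jl c = 0"
  proof (rule tendsto_const_add_null_imp_eq_0)
    have "((\<lambda>t. e t * (t / ln t)) \<longlongrightarrow> 0) (at_right 0)" by (rule tendsto_mult_zero[OF e]) real_asymp
    then show "((\<lambda>t. jl c + (jt c * (1 / ln t) + sqrt t * lq t * (1 / ln t))) \<longlongrightarrow> 0) (at_right 0)"
      by (rule Lim_transform_eventually[OF _ ev])
        (auto simp: e_def lq_def eval_jet_def c0 jet_lin_def field_simps power2_eq_square)
    have "((\<lambda>t. jt c * (1 / ln t) + sqrt t * lq t * (1 / ln t)) \<longlongrightarrow> jt c * 0 + 0 * 0 * 0) (at_right 0)"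
      by (intro tendsto_intros lq; real_asymp)
    then show "((\<lambda>t. jt c * (1 / ln t) + sqrt t * lq t * (1 / ln t)) \<longlongrightarrow> 0) (at_right 0)" by simp
  qed
  have c2: "jt c = 0"
  proof (rule tendsto_const_add_null_imp_eq_0)
    have "((\<lambda>t. e t * t) \<longlongrightarrow> 0) (at_right 0)" by (rule tendsto_mult_zero[OF e]) real_asymp
    then show "((\<lambda>t. jt c + sqrt t * lq t) \<longlongrightarrow> 0) (at_right 0)"
      by (rule Lim_transform_eventually[OF _ ev])
        (auto simp: e_def lq_def eval_jet_def c0 c1 jet_lin_def field_simps power2_eq_square)
    have "((\<lambda>t. sqrt t * lq t) \<longlongrightarrow> 0 * 0) (at_right 0)" by (intro tendsto_intros lq; real_asymp)
    then show "((\<lambda>t. sqrt t * lq t) \<longlongrightarrow> 0) (at_right 0)" by simp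
  qed
  have "((\<lambda>t. jll c * ln t ^ 2 + jlt c * ln t + jtt c) \<longlongrightarrow> 0) (at_right 0)"
    using e by (rule Lim_transform_eventually[OF _ ev]) (simp add: e_def eval_jet_def c0 c1 c2 jet_lin_def jet_quad_def)
  note quad = quadratic_in_ln_tendsto_0_imp[OF this]
  show ?thesis using c0 c1 c2 quad by (simp add: jet.expand zero_jet_def)
qed

section \<open>The operator in terms of the first and second derivatives\<close>

definition gradient_weight :: "'a::comm_ring_1 \<Rightarrow> 'a \<Rightarrow> 'a" where
  "gradient_weight u1 u2 = 1 + u1^2 + u2^2"

definition curvature_numerator :: "'a::comm_ring_1 \<Rightarrow> 'a \<Rightarrow> 'a \<Rightarrow> 'a \<Rightarrow> 'a \<Rightarrow> 'a" where
  "curvature_numerator u1 u2 u11 u12 u22 = (1 + u2^2) * u11 - 2 * u1 * u2 * u12 + (1 + u1^2) * u22"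

definition Q_rat_part :: "'a::comm_ring_1 \<Rightarrow> 'a \<Rightarrow> 'a \<Rightarrow> 'a \<Rightarrow> 'a \<Rightarrow> 'a \<Rightarrow> 'a" where
  "Q_rat_part t u1 u2 u11 u12 u22 =
     2 * u2 * gradient_weight u1 u2 - t * curvature_numerator u1 u2 u11 u12 u22"

definition Q_rationalized :: "'a::comm_ring_1 \<Rightarrow> 'a \<Rightarrow> 'a \<Rightarrow> 'a \<Rightarrow> 'a \<Rightarrow> 'a \<Rightarrow> 'a \<Rightarrow> 'a" where
  "Q_rationalized h t u1 u2 u11 u12 u22 =
     4 * h * gradient_weight u1 u2 ^ 3 - Q_rat_part t u1 u2 u11 u12 u22 ^ 2"

definition Q_formula :: "real \<Rightarrow> real \<Rightarrow> real \<Rightarrow> real \<Rightarrow> real \<Rightarrow> real \<Rightarrow> real \<Rightarrow> real" where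
  "Q_formula H t u1 u2 u11 u12 u22 =
     curvature_numerator u1 u2 u11 u12 u22 / gradient_weight u1 u2
     - 2 / t * (u2 - H * sqrt (gradient_weight u1 u2))"

lemma gradient_weight_pos: "gradient_weight u1 u2 > (0::real)"
  unfolding gradient_weight_def by (simp add: add_pos_nonneg)

lemma Qop_eq_Q_formula:
  assumes "pd1 (pd2 u) x t = pd2 (pd1 u) x t"
  shows "Qop H u x t = Q_formula H t (pd1 u x t) (pd2 u x t) (pd1 (pd1 u) x t) (pd2 (pd1 u) x t) (pd2 (pd2 u) x t)"
  using assms gradient_weight_pos[of "pd1 u x t" "pd2 u x t"]
  unfolding Qop_def Q_formula_def curvature_numerator_def Let_def
  by (simp add: gradient_weight_def field_simps power2_eq_square)

lemma t_weight_Q_formula: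
  fixes t u1 u2 u11 u12 u22 :: real
  defines "W \<equiv> gradient_weight u1 u2"
  assumes "t \<noteq> 0"
  shows "t * W * Q_formula H t u1 u2 u11 u12 u22 = 2 * H * sqrt W * W - Q_rat_part t u1 u2 u11 u12 u22"
  using assms gradient_weight_pos[of u1 u2]
  unfolding Q_formula_def Q_rat_part_def W_def[symmetric] by (simp add: field_simps)

lemma Q_rationalized_factor:
  fixes t u1 u2 u11 u12 u22 :: real
  defines "W \<equiv> gradient_weight u1 u2" and "M \<equiv> Q_rat_part t u1 u2 u11 u12 u22"
  shows "Q_rationalized (H^2) t u1 u2 u11 u12 u22 = (2 * H * sqrt W * W - M) * (2 * H * sqrt W * W + M)"
proof -
  have "sqrt W ^ 2 = W" using gradient_weight_pos[of u1 u2] unfolding W_def by simp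
  then show ?thesis unfolding Q_rationalized_def W_def[symmetric] M_def[symmetric]
    by (simp add: algebra_simps power2_eq_square power3_eq_cube)
qed

lemma has_jet_gradient_weight:
  "has_jet u1 J1 \<Longrightarrow> has_jet u2 J2 \<Longrightarrow> has_jet (\<lambda>t. gradient_weight (u1 t) (u2 t)) (gradient_weight J1 J2)"
  unfolding gradient_weight_def by (intro has_jet_intros)

lemma has_jet_Q_rat_part:
  assumes "has_jet u1 J1" "has_jet u2 J2" "has_jet u11 J11" "has_jet u12 J12" "has_jet u22 J22"
  shows "has_jet (\<lambda>t. Q_rat_part t (u1 t) (u2 t) (u11 t) (u12 t) (u22 t)) (Q_rat_part jet_t J1 J2 J11 J12 J22)"
  unfolding Q_rat_part_def gradient_weight_def curvature_numerator_def by (intro has_jet_intros assms)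

lemma has_jet_Q_rationalized:
  assumes "has_jet u1 J1" "has_jet u2 J2" "has_jet u11 J11" "has_jet u12 J12" "has_jet u22 J22"
  shows "has_jet (\<lambda>t. Q_rationalized h t (u1 t) (u2 t) (u11 t) (u12 t) (u22 t))
    (Q_rationalized (jet_const h) jet_t J1 J2 J11 J12 J22)"
  unfolding Q_rationalized_def by (intro has_jet_intros has_jet_Q_rat_part has_jet_gradient_weight assms)

lemma Q_formula_smallo_imp:
  fixes u1 u2 u11 u12 u22 :: "real \<Rightarrow> real"
  defines "W \<equiv> \<lambda>t. gradient_weight (u1 t) (u2 t)"
  assumes W: "(W \<longlongrightarrow> w) (at_right 0)"
    and Q: "(\<lambda>t. Q_formula H t (u1 t) (u2 t) (u11 t) (u12 t) (u22 t)) \<in> o[at_right 0](\<lambda>t. t)"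
  shows "((\<lambda>t. (2 * H * sqrt (W t) * W t - Q_rat_part t (u1 t) (u2 t) (u11 t) (u12 t) (u22 t)) / t^2)
    \<longlongrightarrow> 0) (at_right 0)"
proof -
  have "((\<lambda>t. W t * (Q_formula H t (u1 t) (u2 t) (u11 t) (u12 t) (u22 t) / t)) \<longlongrightarrow> w * 0) (at_right 0)"
    by (intro tendsto_intros W smalloD_tendsto[OF Q])
  moreover have "eventually (\<lambda>t. W t * (Q_formula H t (u1 t) (u2 t) (u11 t) (u12 t) (u22 t) / t) =
      (2 * H * sqrt (W t) * W t - Q_rat_part t (u1 t) (u2 t) (u11 t) (u12 t) (u22 t)) / t^2) (at_right 0)"
    by (rule eventually_mono[OF eventually_at_right_less])
      (simp add: W_def t_weight_Q_formula[symmetric] power2_eq_square)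
  ultimately show ?thesis by (simp add: tendsto_cong)
qed

lemma jets_vanish_if_Q_formula_smallo:
  assumes jets: "has_jet u1 J1" "has_jet u2 J2" "has_jet u11 J11" "has_jet u12 J12" "has_jet u22 J22"
    and Q: "(\<lambda>t. Q_formula H t (u1 t) (u2 t) (u11 t) (u12 t) (u22 t)) \<in> o[at_right 0](\<lambda>t. t)"
  shows "Q_rationalized (jet_const (H^2)) jet_t J1 J2 J11 J12 J22 = 0"
    and "H = 0 \<Longrightarrow> Q_rat_part jet_t J1 J2 J11 J12 J22 = 0"
proof -
  define W where "W t = gradient_weight (u1 t) (u2 t)" for t
  define M where "M t = Q_rat_part t (u1 t) (u2 t) (u11 t) (u12 t) (u22 t)" for t
  have W: "(W \<longlongrightarrow> j1 (gradient_weight J1 J2)) (at_right 0)"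
    unfolding W_def by (intro has_jet_tendsto has_jet_gradient_weight jets)
  have jM: "has_jet M (Q_rat_part jet_t J1 J2 J11 J12 J22)"
    unfolding M_def by (intro has_jet_Q_rat_part jets)
  have F: "((\<lambda>t. (2 * H * sqrt (W t) * W t - M t) / t^2) \<longlongrightarrow> 0) (at_right 0)"
    using Q_formula_smallo_imp[OF W[unfolded W_def] Q] by (simp add: W_def M_def)
  show "Q_rationalized (jet_const (H^2)) jet_t J1 J2 J11 J12 J22 = 0"
  proof (rule jet_eq_0_if_smallo)
    show "has_jet (\<lambda>t. Q_rationalized (H^2) t (u1 t) (u2 t) (u11 t) (u12 t) (u22 t))
        (Q_rationalized (jet_const (H^2)) jet_t J1 J2 J11 J12 J22)"
      by (intro has_jet_Q_rationalized jets)
    have "((\<lambda>t. (2 * H * sqrt (W t) * W t - M t) / t^2 * (2 * H * sqrt (W t) * W t + M t))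
        \<longlongrightarrow> 0 * (2 * H * sqrt (j1 (gradient_weight J1 J2)) * j1 (gradient_weight J1 J2)
          + j1 (Q_rat_part jet_t J1 J2 J11 J12 J22))) (at_right 0)"
      by (intro tendsto_intros F W has_jet_tendsto[OF jM])
    then show "((\<lambda>t. Q_rationalized (H^2) t (u1 t) (u2 t) (u11 t) (u12 t) (u22 t) / t^2) \<longlongrightarrow> 0) (at_right 0)"
      by (simp add: Q_rationalized_factor W_def M_def)
  qed
  show "Q_rat_part jet_t J1 J2 J11 J12 J22 = 0" if "H = 0"
    using jet_eq_0_if_smallo[OF jM] tendsto_minus[OF F] by (simp add: that)
qed

lemma Ck_on_has_real_derivative:
  "Ck_on k f S \<Longrightarrow> x \<in> S \<Longrightarrow> j < k \<Longrightarrow> ((deriv ^^ j) f has_real_derivative (deriv ^^ Suc j) f x) (at x)"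
  by (simp add: Ck_on_def DERIV_deriv_iff_real_differentiable)

lemma Ck_on_DERIV: "Ck_on k f S \<Longrightarrow> x \<in> S \<Longrightarrow> 0 < k \<Longrightarrow> (f has_real_derivative deriv f x) (at x)"
  using Ck_on_has_real_derivative[of k f S x 0] by simp

lemma Ck_on_DERIV_deriv:
  "Ck_on k f S \<Longrightarrow> x \<in> S \<Longrightarrow> 1 < k \<Longrightarrow> (deriv f has_real_derivative deriv (deriv f) x) (at x)"
  using Ck_on_has_real_derivative[of k f S x 1] by simp

lemma Ck_on_mono:
  assumes "Ck_on k f S" "j \<le> k"
  shows "Ck_on j f S"
proof (cases "j = k")
  case False
  with assms have "\<forall>x\<in>S. isCont ((deriv ^^ j) f) x"
    unfolding Ck_on_def by (auto intro: differentiable_imp_continuous_within)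
  with assms show ?thesis unfolding Ck_on_def by (auto intro: continuous_at_imp_continuous_on)
qed (use assms in simp)

lemma DERIV_eq_on_open:
  assumes "open I" "x \<in> I" "\<And>y. y \<in> I \<Longrightarrow> f y = g y"
    and "(f has_real_derivative D) (at x)" "(g has_real_derivative E) (at x)"
  shows "D = E"
proof -
  have "(g has_real_derivative D) (at x)"
    using assms(4) by (rule has_field_derivative_transform_within_open[OF _ assms(1,2)]) (simp add: assms(3))
  then show ?thesis using assms(5) by (rule DERIV_unique)
qed

lemma DERIV_of_slope_relation:
  assumes "open I" "x \<in> I" "H \<noteq> 0"
    and rel: "\<And>y. y \<in> I \<Longrightarrow> a y ^ 2 = H^2 * (1 + p y ^ 2 + a y ^ 2)"
    and a: "(a has_real_derivative a') (at x)" and p: "(p has_real_derivative p') (at x)"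
  shows "a' = a x * p x * p' / (1 + p x ^ 2)"
proof -
  have "2 * a x * a' = H^2 * (2 * p x * p' + 2 * a x * a')"
    by (rule DERIV_eq_on_open[OF assms(1,2) rel]) (auto intro!: derivative_eq_intros a p)
  then have "H^2 * ((1 + p x ^ 2) * a' - a x * p x * p') = 0"
    using rel[OF assms(2)] by algebra
  with \<open>H \<noteq> 0\<close> have "(1 + p x ^ 2) * a' = a x * p x * p'" by simp
  moreover have "1 + p x ^ 2 > 0" by (simp add: add_pos_nonneg)
  ultimately show ?thesis by (simp add: field_simps)
qed

definition ansatz :: "real \<Rightarrow> real \<Rightarrow> real \<Rightarrow> real \<Rightarrow> real \<Rightarrow> real" where
  "ansatz c0 c1 c2 c3 t = c0 + c1 * t + c2 * t^2 + c3 * t^3 * ln t"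

definition ansatz_dt :: "real \<Rightarrow> real \<Rightarrow> real \<Rightarrow> real \<Rightarrow> real" where
  "ansatz_dt c1 c2 c3 t = c1 + 2 * c2 * t + c3 * (3 * t^2 * ln t + t^2)"

definition ansatz_dtt :: "real \<Rightarrow> real \<Rightarrow> real \<Rightarrow> real" where
  "ansatz_dtt c2 c3 t = 2 * c2 + c3 * (6 * t * ln t + 5 * t)"

definition ansatz_jet :: "real \<Rightarrow> real \<Rightarrow> real \<Rightarrow> jet" where
  "ansatz_jet c0 c1 c2 = Jet c0 0 c1 0 0 c2"

definition ansatz_dt_jet :: "real \<Rightarrow> real \<Rightarrow> real \<Rightarrow> jet" where
  "ansatz_dt_jet c1 c2 c3 = Jet c1 0 (2 * c2) 0 (3 * c3) c3"

definition ansatz_dtt_jet :: "real \<Rightarrow> real \<Rightarrow> jet" where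
  "ansatz_dtt_jet c2 c3 = Jet (2 * c2) (6 * c3) (5 * c3) 0 0 0"

lemma has_real_derivative_ansatz:
  "t > 0 \<Longrightarrow> (ansatz c0 c1 c2 c3 has_real_derivative ansatz_dt c1 c2 c3 t) (at t)"
  unfolding ansatz_def ansatz_dt_def
  by (auto intro!: derivative_eq_intros simp: field_simps power2_eq_square power3_eq_cube)

lemma has_real_derivative_ansatz_dt:
  "t > 0 \<Longrightarrow> (ansatz_dt c1 c2 c3 has_real_derivative ansatz_dtt c2 c3 t) (at t)"
  unfolding ansatz_dt_def ansatz_dtt_def
  by (auto intro!: derivative_eq_intros simp: field_simps power2_eq_square)

lemma has_real_derivative_ansatz_coeffs:
  assumes "(f0 has_real_derivative g0) (at x)" "(f1 has_real_derivative g1) (at x)"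
    "(f2 has_real_derivative g2) (at x)" "(f3 has_real_derivative g3) (at x)"
  shows "((\<lambda>s. ansatz (f0 s) (f1 s) (f2 s) (f3 s) t) has_real_derivative ansatz g0 g1 g2 g3 t) (at x)"
  unfolding ansatz_def by (auto intro!: derivative_eq_intros assms)

lemma has_real_derivative_ansatz_dt_coeffs:
  assumes "(f1 has_real_derivative g1) (at x)" "(f2 has_real_derivative g2) (at x)"
    "(f3 has_real_derivative g3) (at x)"
  shows "((\<lambda>s. ansatz_dt (f1 s) (f2 s) (f3 s) t) has_real_derivative ansatz_dt g1 g2 g3 t) (at x)"
  unfolding ansatz_dt_def by (auto intro!: derivative_eq_intros assms)

lemma has_jet_ansatz: "has_jet (ansatz c0 c1 c2 c3) (ansatz_jet c0 c1 c2)"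
proof -
  have "((\<lambda>t. c3 * (t * ln t)) \<longlongrightarrow> c3 * 0) (at_right 0)" by (intro tendsto_intros; real_asymp)
  moreover have "eventually (\<lambda>t. c3 * (t * ln t) = (ansatz c0 c1 c2 c3 t - eval_jet (ansatz_jet c0 c1 c2) t) / t^2)
      (at_right 0)"
    by (rule eventually_mono[OF eventually_at_right_less])
      (simp add: ansatz_def ansatz_jet_def eval_jet_def jet_lin_def jet_quad_def field_simps
        power2_eq_square power3_eq_cube)
  ultimately show ?thesis unfolding has_jet_def by (simp add: tendsto_cong)
qed

lemma has_jet_ansatz_dt: "has_jet (ansatz_dt c1 c2 c3) (ansatz_dt_jet c1 c2 c3)"
  by (simp add: has_jet_def ansatz_dt_def ansatz_dt_jet_def eval_jet_def jet_lin_def jet_quad_def algebra_simps)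

lemma has_jet_ansatz_dtt: "has_jet (ansatz_dtt c2 c3) (ansatz_dtt_jet c2 c3)"
  by (simp add: has_jet_def ansatz_dtt_def ansatz_dtt_jet_def eval_jet_def jet_lin_def jet_quad_def algebra_simps)

lemma Qop_ansatz:
  assumes "open I" "x \<in> I" "t > 0" "Ck_on 2 f0 I" "Ck_on 2 f1 I" "Ck_on 2 f2 I" "Ck_on 2 f3 I"
  shows "Qop H (\<lambda>s t. ansatz (f0 s) (f1 s) (f2 s) (f3 s) t) x t =
    Q_formula H t (ansatz (deriv f0 x) (deriv f1 x) (deriv f2 x) (deriv f3 x) t) (ansatz_dt (f1 x) (f2 x) (f3 x) t)
      (ansatz (deriv (deriv f0) x) (deriv (deriv f1) x) (deriv (deriv f2) x) (deriv (deriv f3) x) t)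
      (ansatz_dt (deriv f1 x) (deriv f2 x) (deriv f3 x) t) (ansatz_dtt (f2 x) (f3 x) t)"
proof -
  define u where "u = (\<lambda>s t. ansatz (f0 s) (f1 s) (f2 s) (f3 s) t)"
  have D: "(f has_real_derivative deriv f y) (at y)" if "Ck_on 2 f I" "y \<in> I" for f y
    using Ck_on_DERIV[OF that] by simp
  have DD: "(deriv f has_real_derivative deriv (deriv f) x) (at x)" if "Ck_on 2 f I" for f
    using Ck_on_DERIV_deriv[OF that assms(2)] by simp
  have pd1u: "pd1 u y \<tau> = ansatz (deriv f0 y) (deriv f1 y) (deriv f2 y) (deriv f3 y) \<tau>" if "y \<in> I" for y \<tau>
    unfolding pd1_def u_def
    by (intro DERIV_imp_deriv has_real_derivative_ansatz_coeffs D assms that)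
  have pd2u: "pd2 u y \<tau> = ansatz_dt (f1 y) (f2 y) (f3 y) \<tau>" if "\<tau> > 0" for y \<tau>
    unfolding pd2_def u_def by (intro DERIV_imp_deriv has_real_derivative_ansatz that)
  have "pd1 (pd1 u) x t = deriv (\<lambda>y. ansatz (deriv f0 y) (deriv f1 y) (deriv f2 y) (deriv f3 y) t) x"
    unfolding pd1_def[of "pd1 u"]
    by (rule deriv_cong_ev[OF eventually_mono[OF eventually_nhds_in_open[OF assms(1,2)]]]) (simp_all add: pd1u)
  also have "\<dots> = ansatz (deriv (deriv f0) x) (deriv (deriv f1) x) (deriv (deriv f2) x) (deriv (deriv f3) x) t"
    by (intro DERIV_imp_deriv has_real_derivative_ansatz_coeffs DD assms)
  finally have pd11: "pd1 (pd1 u) x t = \<dots>" .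
  have "pd2 (pd2 u) x t = deriv (ansatz_dt (f1 x) (f2 x) (f3 x)) t"
    unfolding pd2_def[of "pd2 u"]
    by (rule deriv_cong_ev[OF eventually_mono[OF eventually_nhds_in_open[of "{0<..}" t]]])
      (simp_all add: pd2u assms(3))
  also have "\<dots> = ansatz_dtt (f2 x) (f3 x) t"
    by (intro DERIV_imp_deriv has_real_derivative_ansatz_dt assms(3))
  finally have pd22: "pd2 (pd2 u) x t = \<dots>" .
  have pd21: "pd2 (pd1 u) x t = ansatz_dt (deriv f1 x) (deriv f2 x) (deriv f3 x) t"
    unfolding pd2_def pd1u[OF assms(2)] by (intro DERIV_imp_deriv has_real_derivative_ansatz assms(3))
  have pd12: "pd1 (pd2 u) x t = ansatz_dt (deriv f1 x) (deriv f2 x) (deriv f3 x) t"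
    unfolding pd1_def pd2u[OF assms(3)]
    by (intro DERIV_imp_deriv has_real_derivative_ansatz_dt_coeffs D assms)
  show ?thesis
    unfolding u_def[symmetric] Qop_eq_Q_formula[of u x t, OF pd12[folded pd21]]
    by (simp only: pd11 pd22 pd21 pd1u[OF assms(2)] pd2u[OF assms(3)])
qed

text \<open>In the jets below p1, p2 stand for phi', phi'' and a_k, b_k, d_k for the k-th derivatives
  of c1, c2, c31 at the boundary point.\<close>

definition rationalized_jet ::
  "real \<Rightarrow> real \<Rightarrow> real \<Rightarrow> real \<Rightarrow> real \<Rightarrow> real \<Rightarrow> real \<Rightarrow> real \<Rightarrow> real \<Rightarrow> real \<Rightarrow> real \<Rightarrow> jet" where
  "rationalized_jet h p1 p2 a0 a1 a2 b0 b1 b2 d0 d1 =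
     Q_rationalized (jet_const h) jet_t (ansatz_jet p1 a1 b1) (ansatz_dt_jet a0 b0 d0)
       (ansatz_jet p2 a2 b2) (ansatz_dt_jet a1 b1 d1) (ansatz_dtt_jet b0 d0)"

definition rat_part_jet ::
  "real \<Rightarrow> real \<Rightarrow> real \<Rightarrow> real \<Rightarrow> real \<Rightarrow> real \<Rightarrow> real \<Rightarrow> real \<Rightarrow> real \<Rightarrow> real \<Rightarrow> jet" where
  "rat_part_jet p1 p2 a0 a1 a2 b0 b1 b2 d0 d1 =
     Q_rat_part jet_t (ansatz_jet p1 a1 b1) (ansatz_dt_jet a0 b0 d0)
       (ansatz_jet p2 a2 b2) (ansatz_dt_jet a1 b1 d1) (ansatz_dtt_jet b0 d0)"

lemma ansatz_jets_vanish:
  assumes "open I" "x \<in> I" "Ck_on 2 \<phi> I" "Ck_on 2 c1 I" "Ck_on 2 c2 I" "Ck_on 2 c3 I"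
    and Q: "(\<lambda>t. Qop H (\<lambda>s t. ansatz (\<phi> s) (c1 s) (c2 s) (c3 s) t) x t) \<in> o[at_right 0](\<lambda>t. t)"
  shows "rationalized_jet (H^2) (deriv \<phi> x) (deriv (deriv \<phi>) x) (c1 x) (deriv c1 x) (deriv (deriv c1) x)
      (c2 x) (deriv c2 x) (deriv (deriv c2) x) (c3 x) (deriv c3 x) = 0" (is ?P)
    and "H = 0 \<Longrightarrow> rat_part_jet (deriv \<phi> x) (deriv (deriv \<phi>) x) (c1 x) (deriv c1 x) (deriv (deriv c1) x)
      (c2 x) (deriv c2 x) (deriv (deriv c2) x) (c3 x) (deriv c3 x) = 0"
proof -
  have "(\<lambda>t. Q_formula H t (ansatz (deriv \<phi> x) (deriv c1 x) (deriv c2 x) (deriv c3 x) t)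
      (ansatz_dt (c1 x) (c2 x) (c3 x) t)
      (ansatz (deriv (deriv \<phi>) x) (deriv (deriv c1) x) (deriv (deriv c2) x) (deriv (deriv c3) x) t)
      (ansatz_dt (deriv c1 x) (deriv c2 x) (deriv c3 x) t) (ansatz_dtt (c2 x) (c3 x) t))
    \<in> o[at_right 0](\<lambda>t. t)"
    using Q by (subst landau_o.small.in_cong[OF eventually_mono[OF eventually_at_right_less]])
      (auto simp: Qop_ansatz[OF assms(1,2) _ assms(3-6)])
  note vanish = jets_vanish_if_Q_formula_smallo[OF has_jet_ansatz has_jet_ansatz_dt has_jet_ansatz
      has_jet_ansatz_dt has_jet_ansatz_dtt this]
  show ?P using vanish(1) by (simp add: rationalized_jet_def)
  show "rat_part_jet (deriv \<phi> x) (deriv (deriv \<phi>) x) (c1 x) (deriv c1 x) (deriv (deriv c1) x)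
      (c2 x) (deriv c2 x) (deriv (deriv c2) x) (c3 x) (deriv c3 x) = 0" if "H = 0"
    using vanish(2)[OF that] by (simp add: rat_part_jet_def)
qed

section \<open>The jet coefficients\<close>

lemma jet_sel_Q_rationalized:
  fixes u1 u2 u11 u12 u22 :: jet
  defines "W \<equiv> gradient_weight u1 u2" and "M \<equiv> Q_rat_part jet_t u1 u2 u11 u12 u22"
  shows "j1 (Q_rationalized (jet_const h) jet_t u1 u2 u11 u12 u22) = 4 * (h * j1 W) * j1 W ^ 2 - j1 M ^ 2"
    and "jt (Q_rationalized (jet_const h) jet_t u1 u2 u11 u12 u22) =
      12 * (h * j1 W) * j1 W * jt W - 2 * j1 M * jt M"
    and "jtt (Q_rationalized (jet_const h) jet_t u1 u2 u11 u12 u22) =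
      12 * (h * j1 W) * (j1 W * jtt W + jt W ^ 2) - (2 * j1 M * jtt M + jt M ^ 2)"
  unfolding Q_rationalized_def W_def[symmetric] M_def[symmetric] power2_eq_square power3_eq_cube
  by (simp_all add: jet_sel algebra_simps)

lemma jet_sel_Q_rat_part:
  fixes u1 u2 u11 u12 u22 :: jet
  defines "W \<equiv> gradient_weight u1 u2" and "N \<equiv> curvature_numerator u1 u2 u11 u12 u22"
  shows "j1 (Q_rat_part jet_t u1 u2 u11 u12 u22) = 2 * j1 u2 * j1 W"
    and "jt (Q_rat_part jet_t u1 u2 u11 u12 u22) = 2 * (j1 u2 * jt W + jt u2 * j1 W) - j1 N"
    and "jtt (Q_rat_part jet_t u1 u2 u11 u12 u22) = 2 * (j1 u2 * jtt W + jt u2 * jt W + jtt u2 * j1 W) - jt N"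
  unfolding Q_rat_part_def W_def[symmetric] N_def[symmetric]
  by (simp_all add: jet_sel algebra_simps)

lemma jet_sel_gradient_weight_ansatz:
  "j1 (gradient_weight (ansatz_jet p1 a1 b1) (ansatz_dt_jet a0 b0 d0)) = 1 + p1^2 + a0^2"
  "jt (gradient_weight (ansatz_jet p1 a1 b1) (ansatz_dt_jet a0 b0 d0)) = 2 * p1 * a1 + 4 * a0 * b0"
  "jtt (gradient_weight (ansatz_jet p1 a1 b1) (ansatz_dt_jet a0 b0 d0)) =
     a1^2 + 2 * p1 * b1 + 4 * b0^2 + 2 * a0 * d0"
  unfolding gradient_weight_def power2_eq_square
  by (simp_all add: jet_sel ansatz_jet_def ansatz_dt_jet_def algebra_simps)

lemma jet_sel_curvature_numerator_ansatz:
  "j1 (curvature_numerator (ansatz_jet p1 a1 b1) (ansatz_dt_jet a0 b0 d0) (ansatz_jet p2 a2 b2)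
      (ansatz_dt_jet a1 b1 d1) (ansatz_dtt_jet b0 d0)) =
     (1 + a0^2) * p2 - 2 * p1 * a0 * a1 + 2 * (1 + p1^2) * b0"
  "jt (curvature_numerator (ansatz_jet p1 a1 b1) (ansatz_dt_jet a0 b0 d0) (ansatz_jet p2 a2 b2)
      (ansatz_dt_jet a1 b1 d1) (ansatz_dtt_jet b0 d0)) =
     (1 + a0^2) * a2 + 4 * a0 * b0 * p2 - 2 * (2 * p1 * a0 * b1 + (2 * p1 * b0 + a0 * a1) * a1)
       + 5 * (1 + p1^2) * d0 + 4 * p1 * a1 * b0"
  unfolding curvature_numerator_def power2_eq_square
  by (simp_all add: jet_sel ansatz_jet_def ansatz_dt_jet_def ansatz_dtt_jet_def algebra_simps)

lemma jet_sel_ansatz_dt_jet: "j1 (ansatz_dt_jet a0 b0 d0) = a0" "jt (ansatz_dt_jet a0 b0 d0) = 2 * b0"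
  "jtt (ansatz_dt_jet a0 b0 d0) = d0"
  by (simp_all add: ansatz_dt_jet_def)

lemmas jet_sel_ansatz = jet_sel_Q_rationalized jet_sel_Q_rat_part jet_sel_gradient_weight_ansatz
  jet_sel_curvature_numerator_ansatz jet_sel_ansatz_dt_jet

lemma rationalized_jet_1:
  assumes "rationalized_jet h p1 p2 a0 a1 a2 b0 b1 b2 d0 d1 = 0"
  shows "a0^2 = h * (1 + p1^2 + a0^2)"
proof -
  have "4 * (1 + p1^2 + a0^2)^2 * (h * (1 + p1^2 + a0^2) - a0^2) = 0"
    using arg_cong[OF assms, of j1] unfolding rationalized_jet_def jet_sel_ansatz jet_sel_const
    by (simp add: algebra_simps power2_eq_square)
  moreover have "1 + p1^2 + a0^2 \<noteq> 0"
    using gradient_weight_pos[of p1 a0] by (simp add: gradient_weight_def)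
  ultimately show ?thesis by simp
qed

lemma rationalized_jet_t:
  assumes "rationalized_jet h p1 p2 a0 a1 a2 b0 b1 b2 d0 d1 = 0"
    and h: "a0^2 = h * (1 + p1^2 + a0^2)" and "a0 \<noteq> 0"
  shows "2 * (1 + p1^2) * b0 = (1 + a0^2) * p2"
proof -
  have "4 * a0 * (1 + p1^2 + a0^2) * ((1 + a0^2) * p2 - 2 * (1 + p1^2) * b0) = 0"
    using arg_cong[OF assms(1), of jt] unfolding rationalized_jet_def jet_sel_ansatz jet_sel_const h[symmetric]
    by (simp add: algebra_simps power2_eq_square)
  moreover have "1 + p1^2 + a0^2 \<noteq> 0"
    using gradient_weight_pos[of p1 a0] by (simp add: gradient_weight_def)
  ultimately show ?thesis using \<open>a0 \<noteq> 0\<close> by simp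
qed

lemma rationalized_jet_tt:
  fixes h p1 p2 p3 a0 a1 a2 b0 b1 b2 d0 d1 :: real
  defines "R \<equiv> 1 + p1^2"
  assumes "rationalized_jet h p1 p2 a0 a1 a2 b0 b1 b2 d0 d1 = 0"
    and h: "a0^2 = h * (1 + p1^2 + a0^2)"
    and a1: "a1 = a0 * p1 * p2 / R"
    and a2: "a2 = (a1 * p1 * p2 + a0 * (p2^2 + p1 * p3)) / R - 2 * a0 * p1^2 * p2^2 / R^2"
    and b0: "b0 = (1 + a0^2) * p2 / (2 * R)"
    and b1: "b1 = (2 * a0 * a1 * p2 + (1 + a0^2) * p3) / (2 * R) - (1 + a0^2) * p1 * p2^2 / R^2"
  shows "a0 * d0 = 0"
proof -
  have "R > 0" unfolding R_def by (simp add: add_pos_nonneg)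
  then have R: "R \<noteq> 0" by simp
  \<comment> \<open>In the variables q and s all hypotheses become polynomial.\<close>
  define q s where "q = p2 / R" and "s = p3 / R"
  have p2: "p2 = R * q" and p3: "p3 = R * s" using R by (simp_all add: q_def s_def)
  have a1': "a1 = a0 * p1 * q" using a1 R by (simp add: q_def)
  have "a2 = a0 * q^2 * (R - p1^2) + a0 * p1 * s" using R unfolding a2 a1' p2 p3
    by (simp add: field_simps power2_eq_square)
  then have a2': "a2 = a0 * (q^2 + p1 * s)" by (simp add: R_def algebra_simps)
  have b0': "b0 = (1 + a0^2) * q / 2" using b0 R by (simp add: q_def)
  have b1': "b1 = (1 + a0^2) * s / 2 - p1 * q^2" using b1 R unfolding a1' p2 p3
    by (simp add: field_simps power2_eq_square) algebra
  have "jtt (rationalized_jet h p1 p2 a0 a1 a2 b0 b1 b2 d0 d1) = 12 * a0 * R * (1 + p1^2 + a0^2) * d0"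
    unfolding rationalized_jet_def jet_sel_ansatz h[symmetric]
    unfolding a1' a2' b0' b1' p2 p3 R_def
    by (simp add: field_simps; algebra)
  moreover have "1 + p1^2 + a0^2 \<noteq> 0"
    using gradient_weight_pos[of p1 a0] by (simp add: gradient_weight_def)
  ultimately show ?thesis using arg_cong[OF assms(2), of jtt] R by (simp add: jet_sel_const)
qed

lemma rat_part_jet_1:
  assumes "rat_part_jet p1 p2 a0 a1 a2 b0 b1 b2 d0 d1 = 0"
  shows "a0 = 0"
proof -
  have "2 * a0 * (1 + p1^2 + a0^2) = 0"
    using arg_cong[OF assms, of j1] unfolding rat_part_jet_def jet_sel_ansatz jet_sel_const by simp
  moreover have "1 + p1^2 + a0^2 \<noteq> 0"
    using gradient_weight_pos[of p1 a0] by (simp add: gradient_weight_def)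
  ultimately show ?thesis by simp
qed

lemma rat_part_jet_tt:
  assumes "rat_part_jet p1 p2 0 0 0 b0 b1 b2 d0 d1 = 0"
  shows "d0 = 0"
proof -
  have "- 3 * (1 + p1^2) * d0 = 0"
    using arg_cong[OF assms, of jtt] unfolding rat_part_jet_def jet_sel_ansatz jet_sel_const
    by (simp add: algebra_simps power2_eq_square)
  moreover have "1 + p1^2 > 0" by (simp add: add_pos_nonneg)
  ultimately show ?thesis by simp
qed

lemma c31_vanishes_if_H_nonzero:
  fixes \<phi> c1 c2 c3 :: "real \<Rightarrow> real"
  assumes I: "open I" and H: "H \<noteq> 0" and \<phi>: "Ck_on 3 \<phi> I" and c1: "Ck_on 2 c1 I" and c2: "Ck_on 2 c2 I"
    and jets: "\<And>y. y \<in> I \<Longrightarrow> rationalized_jet (H^2) (deriv \<phi> y) (deriv (deriv \<phi>) y) (c1 y) (deriv c1 y)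
      (deriv (deriv c1) y) (c2 y) (deriv c2 y) (deriv (deriv c2) y) (c3 y) (deriv c3 y) = 0"
    and x: "x \<in> I"
  shows "c3 x = 0"
proof -
  define p1 p2 p3 where "p1 = deriv \<phi>" and "p2 = deriv p1" and "p3 = deriv p2"
  have Dp1: "(p1 has_real_derivative p2 y) (at y)" and Dp2: "(p2 has_real_derivative p3 y) (at y)"
    if "y \<in> I" for y
    using Ck_on_has_real_derivative[OF \<phi> that, of 1] Ck_on_has_real_derivative[OF \<phi> that, of 2]
    by (simp_all add: p1_def p2_def p3_def numeral_2_eq_2)
  have Dc1: "(c1 has_real_derivative deriv c1 y) (at y)" and Dc2: "(c2 has_real_derivative deriv c2 y) (at y)"
    if "y \<in> I" for y
    using Ck_on_DERIV[OF c1 that] Ck_on_DERIV[OF c2 that] by simp_all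
  have Dc1': "(deriv c1 has_real_derivative deriv (deriv c1) x) (at x)"
    using Ck_on_DERIV_deriv[OF c1 x] by simp
  have jets': "rationalized_jet (H^2) (p1 y) (p2 y) (c1 y) (deriv c1 y) (deriv (deriv c1) y)
      (c2 y) (deriv c2 y) (deriv (deriv c2) y) (c3 y) (deriv c3 y) = 0" if "y \<in> I" for y
    using jets[OF that] by (simp add: p1_def p2_def)
  have R: "1 + p1 y ^ 2 > 0" for y by (simp add: add_pos_nonneg)
  have rel1: "c1 y ^ 2 = H^2 * (1 + p1 y ^ 2 + c1 y ^ 2)" if "y \<in> I" for y
    by (rule rationalized_jet_1[OF jets'[OF that]])
  have c1_nonzero: "c1 y \<noteq> 0" if "y \<in> I" for y
    using rel1[OF that] H R[of y] by auto
  have dc1: "deriv c1 y = c1 y * p1 y * p2 y / (1 + p1 y ^ 2)" if y: "y \<in> I" for y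
    by (rule DERIV_of_slope_relation[OF I y H rel1 Dc1[OF y] Dp1[OF y]])
  have c2_eq: "c2 y = (1 + c1 y ^ 2) * p2 y / (2 * (1 + p1 y ^ 2))" if y: "y \<in> I" for y
    using rationalized_jet_t[OF jets'[OF y] rel1[OF y] c1_nonzero[OF y]] R[of y] by (simp add: field_simps)
  have Rx: "1 + p1 x ^ 2 \<noteq> 0" using R[of x] by simp
  have "((\<lambda>y. c1 y * p1 y * p2 y / (1 + p1 y ^ 2)) has_real_derivative
      (deriv c1 x * p1 x * p2 x + c1 x * (p2 x ^ 2 + p1 x * p3 x)) / (1 + p1 x ^ 2)
      - 2 * c1 x * p1 x ^ 2 * p2 x ^ 2 / (1 + p1 x ^ 2) ^ 2) (at x)" (is "(_ has_real_derivative ?d2c1) _")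
    by (auto intro!: derivative_eq_intros Dc1 Dp1 Dp2 x simp: Rx divide_simps; algebra)
  from DERIV_eq_on_open[OF I x dc1 Dc1' this] have d2c1: "deriv (deriv c1) x = ?d2c1" .
  have "((\<lambda>y. (1 + c1 y ^ 2) * p2 y / (2 * (1 + p1 y ^ 2))) has_real_derivative
      (2 * c1 x * deriv c1 x * p2 x + (1 + c1 x ^ 2) * p3 x) / (2 * (1 + p1 x ^ 2))
      - (1 + c1 x ^ 2) * p1 x * p2 x ^ 2 / (1 + p1 x ^ 2) ^ 2) (at x)" (is "(_ has_real_derivative ?dc2) _")
    using Rx by (auto intro!: derivative_eq_intros Dc1 Dp1 Dp2 x simp: Rx divide_simps; algebra)
  from DERIV_eq_on_open[OF I x c2_eq Dc2[OF x] this] have dc2: "deriv c2 x = ?dc2" .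
  have "c1 x * c3 x = 0"
    by (rule rationalized_jet_tt[OF jets'[OF x] rel1[OF x] dc1[OF x] d2c1 c2_eq[OF x] dc2])
  with c1_nonzero[OF x] show ?thesis by simp
qed

lemma c31_vanishes_if_H_zero:
  fixes \<phi> c1 c2 c3 :: "real \<Rightarrow> real"
  assumes I: "open I" and c1: "Ck_on 2 c1 I"
    and jets: "\<And>y. y \<in> I \<Longrightarrow> rat_part_jet (deriv \<phi> y) (deriv (deriv \<phi>) y) (c1 y) (deriv c1 y)
      (deriv (deriv c1) y) (c2 y) (deriv c2 y) (deriv (deriv c2) y) (c3 y) (deriv c3 y) = 0"
    and x: "x \<in> I"
  shows "c3 x = 0"
proof -
  have c1_0: "c1 y = 0" if "y \<in> I" for y
    by (rule rat_part_jet_1[OF jets[OF that]])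
  have dc1_0: "deriv c1 y = 0" if y: "y \<in> I" for y
    by (rule DERIV_eq_on_open[OF I y _ Ck_on_DERIV[OF c1 y] DERIV_const[of 0]]) (simp_all add: c1_0)
  have d2c1_0: "deriv (deriv c1) x = 0"
    by (rule DERIV_eq_on_open[OF I x _ Ck_on_DERIV_deriv[OF c1 x] DERIV_const[of 0]]) (simp_all add: dc1_0)
  show ?thesis
    using jets[OF x] unfolding c1_0[OF x] dc1_0[OF x] d2c1_0 by (rule rat_part_jet_tt)
qed

theorem proposition2p2:
  fixes H :: real and \<phi> c1 c2 c31 :: "real \<Rightarrow> real"
  assumes "\<bar>H\<bar> < 1"
    and "Ck_on 5 \<phi> {-1<..<1}"
    and "Ck_on 2 c1 {-1<..<1}" and "Ck_on 2 c2 {-1<..<1}" and "Ck_on 2 c31 {-1<..<1}"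
    and "\<forall>x1\<in>{-1<..<1}.
           (\<lambda>x2. Qop H (\<lambda>s t. \<phi> s + c1 s * t + c2 s * t\<^sup>2 + c31 s * t ^ 3 * ln t) x1 x2)
             \<in> o[at_right 0](\<lambda>x2. x2)"
  shows "\<forall>x1\<in>{-1<..<1}. c31 x1 = 0"
proof
  fix x
  assume x: "x \<in> {-1<..<(1::real)}"
  define I where "I = {-1<..<(1::real)}"
  have I: "open I" by (simp add: I_def)
  have \<phi>: "Ck_on 2 \<phi> I" "Ck_on 3 \<phi> I" using Ck_on_mono[OF assms(2)] by (simp_all add: I_def)
  have c: "Ck_on 2 c1 I" "Ck_on 2 c2 I" "Ck_on 2 c31 I" using assms(3-5) by (simp_all add: I_def)
  have "(\<lambda>t. Qop H (\<lambda>s t. ansatz (\<phi> s) (c1 s) (c2 s) (c31 s) t) y t) \<in> o[at_right 0](\<lambda>t. t)"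
    if "y \<in> I" for y
    using assms(6) that by (simp add: I_def ansatz_def)
  note jets = ansatz_jets_vanish[OF I _ \<phi>(1) c this]
  show "c31 x = 0"
  proof (cases "H = 0")
    case True
    show ?thesis
      by (rule c31_vanishes_if_H_zero[of I c1 \<phi> c2 c31 x, OF I c(1)])
        (use jets(2) True x in \<open>auto simp: I_def\<close>)
  next
    case False
    show ?thesis
      by (rule c31_vanishes_if_H_nonzero[of I H \<phi> c1 c2 c31 x, OF I False \<phi>(2) c(1,2)])
        (use jets(1) x in \<open>auto simp: I_def\<close>)
  qed
qed

end
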